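(* Assume (A2)–(A4). Then for every $n\ge0$ and all $(x,t)\in K_{R^*,T^*}$, $\partial_t\phi_n(x,t)\ge(1+\varepsilon_0)|\partial_x\phi_n(x,t)|$ and $\partial_t\psi_n(x,t)\ge(1+\varepsilon_0)|\partial_x\psi_n(x,t)|$.
   Context: Let $p>1$ and $\mu>0$ with $p<1+2/\mu$, and let $R^*,T^*>0$. Write $B_R=\{x\in\mathbb{R}:|x|<R\}$. Fix constants $\gamma_1,\gamma_2>0$ with $\gamma_1+\gamma_2>\max\big(1,(\mu p 2^p)^{1/(p-1)}\big)$ (standing assumption). Assumptions on the real functions $f,g$: (A2) $f\ge\gamma_1$, $g\ge\gamma_2$ on $B_{R^*+T^*}$. (A3) $f,g\in\mathcal{C}^4(\overline{B_{R^*+T^*}})$. (A4) There is $\varepsilon_0>0$ with $2^{-p}(\gamma_1+\gamma_2)^p-\frac{\mu}{2}(\gamma_1+\gamma_2)\ge(2+\varepsilon_0)\max_{x\in B_{R^*+T^*}}(|f'(x)|+|g'(x)|)$. Let $K_{R^*,T^*}=\{(x,t):t>0,\ |x-x_0|<T^*-t\ \text{for some } x_0\in B_{R^*}\}$. Define iterates $\phi_0\equiv\gamma_1$, $\psi_0\equiv\gamma_2$ and, with $\mathcal{N}_n(x,s)=2^{-p}|\phi_n+\psi_n|^p(x,s)-\frac{\mu}{1+s}\frac{(\phi_n+\psi_n)(x,s)}{2}$, $\phi_{n+1}(x,t)=f(x+t)+\int_0^t\mathcal{N}_n(x+t-s,s)\,ds$, $\psi_{n+1}(x,t)=g(x-t)+\int_0^t\mathcal{N}_n(x-t+s,s)\,ds$.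 *)

theory Defs
  imports "HOL-Analysis.Analysis"
begin

definition C4_on :: "real set \<Rightarrow> (real \<Rightarrow> real) \<Rightarrow> bool" where
  "C4_on S f \<longleftrightarrow> (\<exists>F :: nat \<Rightarrow> real \<Rightarrow> real. F 0 = f \<and>
      (\<forall>k<4. \<forall>x\<in>S. (F k has_real_derivative F (Suc k) x) (at x within S)) \<and>
      continuous_on S (F 4))"

definition Nl :: "real \<Rightarrow> real \<Rightarrow> (real \<Rightarrow> real \<Rightarrow> real) \<Rightarrow> (real \<Rightarrow> real \<Rightarrow> real)
    \<Rightarrow> real \<Rightarrow> real \<Rightarrow> real" where
  "Nl p \<mu> \<phi> \<psi> y s = 2 powr (-p) * \<bar>\<phi> y s + \<psi> y s\<bar> powr p
      - \<mu> / (1 + s) * ((\<phi> y s + \<psi> y s) / 2)"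

primrec iter :: "real \<Rightarrow> real \<Rightarrow> (real \<Rightarrow> real) \<Rightarrow> (real \<Rightarrow> real) \<Rightarrow> real \<Rightarrow> real \<Rightarrow> nat
    \<Rightarrow> (real \<Rightarrow> real \<Rightarrow> real) \<times> (real \<Rightarrow> real \<Rightarrow> real)" where
  "iter p \<mu> f g \<gamma>1 \<gamma>2 0 = ((\<lambda>x t. \<gamma>1), (\<lambda>x t. \<gamma>2))"
| "iter p \<mu> f g \<gamma>1 \<gamma>2 (Suc n) =
     (let \<phi> = fst (iter p \<mu> f g \<gamma>1 \<gamma>2 n); \<psi> = snd (iter p \<mu> f g \<gamma>1 \<gamma>2 n) in
      ((\<lambda>x t. f (x + t) + integral {0..t} (\<lambda>s. Nl p \<mu> \<phi> \<psi> (x + t - s) s)),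
       (\<lambda>x t. g (x - t) + integral {0..t} (\<lambda>s. Nl p \<mu> \<phi> \<psi> (x - t + s) s))))"

definition phi where "phi p \<mu> f g \<gamma>1 \<gamma>2 n = fst (iter p \<mu> f g \<gamma>1 \<gamma>2 n)"
definition psi where "psi p \<mu> f g \<gamma>1 \<gamma>2 n = snd (iter p \<mu> f g \<gamma>1 \<gamma>2 n)"

definition Kcone :: "real \<Rightarrow> real \<Rightarrow> (real \<times> real) set" where
  "Kcone R T = {(x, t). t > 0 \<and> (\<exists>x0. \<bar>x0\<bar> < R \<and> \<bar>x - x0\<bar> < T - t)}"

end

theory Submission
  imports Defs
begin

(* Write u_n = phi_n + psi_n. By induction on n, on every triangle |x| + t <= c < R + T the iterates
   phi_n, psi_n are C^1, bounded below by gamma1, gamma2, and satisfy d_t >= (1 + eps0) |d_x|.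
   Given this at step n, the nonlinearity N_n is an increasing function of u_n >= gamma1 + gamma2
   (this is what the lower bound on gamma1 + gamma2 is for), and its damping term only increases
   d_s N_n; hence N_n >= 0 and d_s N_n >= (1 + eps0) |d_y N_n|. Differentiating
   phi_{n+1}(x, t) = f(x + t) + int_0^t N_n(x + t - s, s) ds along the characteristic gives
     d_x phi_{n+1} = f'(x + t) + int_0^t d_y N_n,
     d_t phi_{n+1} = f'(x + t) + N_n(x + t, 0) + int_0^t d_s N_n,
   and N_n(x + t, 0) >= (2 + eps0) |f'(x + t)| by (A4). The iterate psi_{n+1} is the mirror image
   of such an integral under x -> -x. *)

section \<open>Parameter-dependent integrals\<close>

lemma continuous_on_slice:
  fixes G :: "'a::topological_space \<Rightarrow> 'b::topological_space \<Rightarrow> 'c::topological_space"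
  assumes "continuous_on (U \<times> V) (\<lambda>w. G (fst w) (snd w))" "z \<in> U"
  shows "continuous_on V (G z)"
  using assms by (intro continuous_on_compose2[OF assms(1), of _ "\<lambda>r. (z, r)", simplified])
    (auto intro!: continuous_intros)

lemma continuous_on_integral_param:
  fixes G :: "'a::metric_space \<Rightarrow> real \<Rightarrow> real"
  assumes "continuous_on (U \<times> {a..b}) (\<lambda>w. G (fst w) (snd w))"
  shows "continuous_on U (\<lambda>z. integral {a..b} (G z))"
proof -
  have "continuous_on (U \<times> cbox a b) (\<lambda>(z, r). G z r)"
    using assms by (simp add: split_beta)
  from integral_continuous_on_param[OF this] show ?thesis
    by simp
qed

lemma has_derivative_integral_param:
  fixes f A B :: "real \<times> real \<Rightarrow> real \<Rightarrow> real"
  assumes U: "convex U" "z0 \<in> U"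
    and f: "\<And>z r. z \<in> U \<Longrightarrow> r \<in> {a..b} \<Longrightarrow>
      ((\<lambda>z. f z r) has_derivative (\<lambda>v. A z r * fst v + B z r * snd v)) (at z within U)"
    and f_cont: "\<And>z. z \<in> U \<Longrightarrow> continuous_on {a..b} (f z)"
    and A: "continuous_on (U \<times> {a..b}) (\<lambda>w. A (fst w) (snd w))"
    and B: "continuous_on (U \<times> {a..b}) (\<lambda>w. B (fst w) (snd w))"
  shows "((\<lambda>z. integral {a..b} (f z)) has_derivative
     (\<lambda>v. integral {a..b} (A z0) * fst v + integral {a..b} (B z0) * snd v)) (at z0 within U)"
proof -
  define L where "L z r = Blinfun (\<lambda>v :: real \<times> real. A z r * fst v + B z r * snd v)" for z r
  have L_apply: "blinfun_apply (L z r) = (\<lambda>v. A z r * fst v + B z r * snd v)" for z r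
    unfolding L_def by (rule bounded_linear_Blinfun_apply) (auto intro!: bounded_linear_intros)
  have L_cont: "continuous_on (U \<times> cbox a b) (\<lambda>(z, r). L z r)"
  proof (rule continuous_on_blinfun_componentwise)
    fix i :: "real \<times> real"
    assume "i \<in> Basis"
    then have "i = (1, 0) \<or> i = (0, 1)"
      by (auto simp: Basis_prod_def)
    then show "continuous_on (U \<times> cbox a b) (\<lambda>w. blinfun_apply (case w of (z, r) \<Rightarrow> L z r) i)"
      using A B by (auto simp: L_apply split_beta)
  qed
  have "((\<lambda>z. integral (cbox a b) (f z)) has_derivative blinfun_apply (integral (cbox a b) (L z0)))
      (at z0 within U)"
    by (rule leibniz_rule[OF _ _ L_cont U(2,1)])
      (use f f_cont in \<open>auto simp: L_apply intro: integrable_continuous_interval\<close>)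
  moreover have "blinfun_apply (integral (cbox a b) (L z0))
      = (\<lambda>v. integral {a..b} (A z0) * fst v + integral {a..b} (B z0) * snd v)"
    (is "_ = ?D")
  proof
    fix v
    have "continuous_on (cbox a b) (L z0)"
      using continuous_on_slice[of U "cbox a b" L z0] L_cont U(2) by (simp add: split_beta)
    then have "blinfun_apply (integral (cbox a b) (L z0)) v = integral (cbox a b) (\<lambda>r. L z0 r v)"
      by (intro blinfun_apply_integral integrable_continuous)
    also have "\<dots> = integral {a..b} (A z0) * fst v + integral {a..b} (B z0) * snd v"
      using continuous_on_slice[OF A U(2)] continuous_on_slice[OF B U(2)]
      by (simp add: L_apply integral_add integrable_on_mult_left integrable_continuous_interval)
    finally show "blinfun_apply (integral (cbox a b) (L z0)) v = ?D v" .
  qed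
  ultimately show ?thesis
    by simp
qed

section \<open>Continuously differentiable functions of (x, t)\<close>

definition C1_partials_on :: "(real \<times> real) set \<Rightarrow> (real \<Rightarrow> real \<Rightarrow> real) \<Rightarrow>
    (real \<Rightarrow> real \<Rightarrow> real) \<Rightarrow> (real \<Rightarrow> real \<Rightarrow> real) \<Rightarrow> bool" where
  "C1_partials_on S P Px Pt \<longleftrightarrow>
    (\<forall>z\<in>S. ((\<lambda>w. P (fst w) (snd w)) has_derivative
        (\<lambda>v. Px (fst z) (snd z) * fst v + Pt (fst z) (snd z) * snd v)) (at z within S)) \<and>
    continuous_on S (\<lambda>z. Px (fst z) (snd z)) \<and> continuous_on S (\<lambda>z. Pt (fst z) (snd z))"

lemma C1_partials_onD:
  assumes "C1_partials_on S P Px Pt"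
  shows C1_partials_on_has_derivative: "\<And>z. z \<in> S \<Longrightarrow> ((\<lambda>w. P (fst w) (snd w)) has_derivative
        (\<lambda>v. Px (fst z) (snd z) * fst v + Pt (fst z) (snd z) * snd v)) (at z within S)"
    and C1_partials_on_continuous_x: "continuous_on S (\<lambda>z. Px (fst z) (snd z))"
    and C1_partials_on_continuous_t: "continuous_on S (\<lambda>z. Pt (fst z) (snd z))"
    and C1_partials_on_continuous: "continuous_on S (\<lambda>z. P (fst z) (snd z))"
  using assms unfolding C1_partials_on_def by (auto intro: has_derivative_continuous_on)

lemma C1_partials_on_const: "C1_partials_on S (\<lambda>_ _. a) (\<lambda>_ _. 0) (\<lambda>_ _. 0)"
  unfolding C1_partials_on_def by (auto intro!: derivative_eq_intros)

lemma C1_partials_on_add: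
  assumes "C1_partials_on S \<Phi> \<Phi>x \<Phi>t" "C1_partials_on S \<Psi> \<Psi>x \<Psi>t"
  shows "C1_partials_on S (\<lambda>y s. \<Phi> y s + \<Psi> y s) (\<lambda>y s. \<Phi>x y s + \<Psi>x y s) (\<lambda>y s. \<Phi>t y s + \<Psi>t y s)"
  unfolding C1_partials_on_def
proof (intro conjI ballI)
  fix z
  assume "z \<in> S"
  from has_derivative_add[OF C1_partials_on_has_derivative[OF assms(1) this]
      C1_partials_on_has_derivative[OF assms(2) this]]
  show "((\<lambda>w. \<Phi> (fst w) (snd w) + \<Psi> (fst w) (snd w)) has_derivative
      (\<lambda>v. (\<Phi>x (fst z) (snd z) + \<Psi>x (fst z) (snd z)) * fst v
        + (\<Phi>t (fst z) (snd z) + \<Psi>t (fst z) (snd z)) * snd v)) (at z within S)"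
    by (rule has_derivative_eq_rhs) (simp add: fun_eq_iff algebra_simps)
qed (use assms in \<open>auto intro!: continuous_intros dest: C1_partials_on_continuous_x C1_partials_on_continuous_t\<close>)

lemma C1_partials_on_compose:
  assumes "C1_partials_on S N N1 N2" "h ` U \<subseteq> S" "x \<in> U"
    and "(h has_derivative h') (at x within U)"
  shows "((\<lambda>x. N (fst (h x)) (snd (h x))) has_derivative
    (\<lambda>v. N1 (fst (h x)) (snd (h x)) * fst (h' v) + N2 (fst (h x)) (snd (h x)) * snd (h' v)))
    (at x within U)"
  using has_derivative_in_compose2[OF C1_partials_on_has_derivative[OF assms(1)] assms(2-4)] by simp

lemma partial_derivatives_at_interior:
  assumes P: "C1_partials_on S P Px Pt" and xt: "(x, t) \<in> interior S"
  shows "((\<lambda>s. P x s) has_real_derivative Pt x t) (at t)"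
    and "((\<lambda>y. P y t) has_real_derivative Px x t) (at x)"
proof -
  have D: "((\<lambda>w. P (fst w) (snd w)) has_derivative (\<lambda>v. Px x t * fst v + Pt x t * snd v)) (at (x, t))"
    using C1_partials_on_has_derivative[OF P, of "(x, t)"] xt interior_subset at_within_interior[OF xt]
    by auto
  have "((\<lambda>s. (x, s)) has_derivative (\<lambda>h. (0, h))) (at t)"
    by (auto intro!: derivative_eq_intros)
  from has_derivative_compose[OF this D]
  show "((\<lambda>s. P x s) has_real_derivative Pt x t) (at t)"
    by (simp add: has_field_derivative_def mult_commute_abs)
  have "((\<lambda>y. (y, t)) has_derivative (\<lambda>h. (h, 0))) (at x)"
    by (auto intro!: derivative_eq_intros)
  from has_derivative_compose[OF this D]
  show "((\<lambda>y. P y t) has_real_derivative Px x t) (at x)"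
    by (simp add: has_field_derivative_def mult_commute_abs)
qed

section \<open>The triangle of dependence\<close>

definition char_triangle :: "real \<Rightarrow> (real \<times> real) set" where
  "char_triangle c = {z. 0 \<le> snd z \<and> \<bar>fst z\<bar> + snd z \<le> c}"

lemma mem_char_triangle [simp]: "(y, s) \<in> char_triangle c \<longleftrightarrow> 0 \<le> s \<and> \<bar>y\<bar> + s \<le> c"
  by (simp add: char_triangle_def)

lemma convex_char_triangle: "convex (char_triangle c)"
proof -
  have "char_triangle c = {z. (0, -1) \<bullet> z \<le> 0} \<inter> {z. (1, 1) \<bullet> z \<le> c} \<inter> {z. (-1, 1) \<bullet> z \<le> c}"
    by (auto simp: char_triangle_def inner_prod_def abs_if)
  then show ?thesis
    by (auto intro!: convex_Int convex_halfspace_le)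
qed

lemma char_triangle_segment:
  assumes "(y, s) \<in> char_triangle c" "r \<in> {0..1}"
  shows "(y + s - s * r, s * r) \<in> char_triangle c"
proof -
  have "0 \<le> s * r" "s * r \<le> s"
    using assms by (auto simp: mult_left_le)
  moreover have "\<bar>y + (s - s * r)\<bar> \<le> \<bar>y\<bar> + \<bar>s - s * r\<bar>"
    by (rule abs_triangle_ineq)
  ultimately show ?thesis
    using assms by (auto simp: algebra_simps)
qed

lemma char_triangle_foot:
  assumes "(y, s) \<in> char_triangle c"
  shows "(y + s, 0) \<in> char_triangle c"
  using assms abs_triangle_ineq[of y s] by simp

lemma interior_char_triangle:
  assumes "0 < t" "\<bar>x\<bar> + t < c"
  shows "(x, t) \<in> interior (char_triangle c)"
proof -
  let ?O = "{z :: real \<times> real. 0 < snd z} \<inter> {z. \<bar>fst z\<bar> + snd z < c}"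
  have "open ?O"
    by (intro open_Int open_Collect_less continuous_intros)
  moreover have "?O \<subseteq> char_triangle c"
    by (auto simp: char_triangle_def)
  ultimately have "?O \<subseteq> interior (char_triangle c)"
    by (rule interior_maximal[rotated])
  then show ?thesis
    using assms by auto
qed

lemma C1_partials_on_reflect:
  assumes P: "C1_partials_on (char_triangle c) P Px Pt"
  shows "C1_partials_on (char_triangle c) (\<lambda>y s. P (- y) s) (\<lambda>y s. - Px (- y) s) (\<lambda>y s. Pt (- y) s)"
proof -
  let ?m = "\<lambda>z :: real \<times> real. (- fst z, snd z)"
  have m: "?m ` char_triangle c \<subseteq> char_triangle c"
    by (auto simp: char_triangle_def)
  have m_cont: "continuous_on (char_triangle c) ?m"
    by (intro continuous_intros)
  show ?thesis
    unfolding C1_partials_on_def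
  proof (intro conjI ballI)
    fix z
    assume z: "z \<in> char_triangle c"
    have "((\<lambda>w. P (fst (?m w)) (snd (?m w))) has_derivative
        (\<lambda>v. Px (fst (?m z)) (snd (?m z)) * fst (?m v) + Pt (fst (?m z)) (snd (?m z)) * snd (?m v)))
        (at z within char_triangle c)"
      by (rule C1_partials_on_compose[OF P m z]) (auto intro!: derivative_eq_intros)
    then show "((\<lambda>w. P (- fst w) (snd w)) has_derivative
        (\<lambda>v. - Px (- fst z) (snd z) * fst v + Pt (- fst z) (snd z) * snd v)) (at z within char_triangle c)"
      by simp
  next
    have "continuous_on (char_triangle c) (\<lambda>z. Px (- fst z) (snd z))"
      using continuous_on_compose2[OF C1_partials_on_continuous_x[OF P] m_cont m] by simp
    then show "continuous_on (char_triangle c) (\<lambda>z. - Px (- fst z) (snd z))"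
      by (rule continuous_on_minus)
    show "continuous_on (char_triangle c) (\<lambda>z. Pt (- fst z) (snd z))"
      using continuous_on_compose2[OF C1_partials_on_continuous_t[OF P] m_cont m] by simp
  qed
qed

section \<open>Integrals along characteristics\<close>

lemma continuous_on_char_segments:
  assumes "continuous_on (char_triangle c) (\<lambda>z. N (fst z) (snd z))"
  shows "continuous_on (char_triangle c \<times> {0..1})
    (\<lambda>w. N (fst (fst w) + snd (fst w) - snd (fst w) * snd w) (snd (fst w) * snd w))"
  using char_triangle_segment
  by (intro continuous_on_compose2[OF assms,
        of _ "\<lambda>w. (fst (fst w) + snd (fst w) - snd (fst w) * snd w, snd (fst w) * snd w)", simplified])
    (auto intro!: continuous_intros)

text \<open>The mean of N over the backward characteristic segment from (y, s) down to (y + s, 0).\<close>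
definition char_mean :: "(real \<Rightarrow> real \<Rightarrow> real) \<Rightarrow> real \<Rightarrow> real \<Rightarrow> real" where
  "char_mean N y s = integral {0..1} (\<lambda>r. N (y + s - s * r) (s * r))"

lemma continuous_on_char_segment:
  assumes "continuous_on (char_triangle c) (\<lambda>z. N (fst z) (snd z))" "(y, s) \<in> char_triangle c"
  shows "continuous_on {0..1} (\<lambda>r. N (y + s - s * r) (s * r))"
  using continuous_on_slice[OF continuous_on_char_segments[OF assms(1)] assms(2)] by simp

lemma integrable_char_segment:
  fixes N :: "real \<Rightarrow> real \<Rightarrow> real"
  assumes "continuous_on (char_triangle c) (\<lambda>z. N (fst z) (snd z))" "(y, s) \<in> char_triangle c"
  shows "(\<lambda>r. N (y + s - s * r) (s * r)) integrable_on {0..1}"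
  by (rule integrable_continuous_real[OF continuous_on_char_segment[OF assms]])

lemma continuous_on_char_mean:
  assumes "continuous_on (char_triangle c) (\<lambda>z. N (fst z) (snd z))"
  shows "continuous_on (char_triangle c) (\<lambda>z. char_mean N (fst z) (snd z))"
  using continuous_on_integral_param[OF continuous_on_char_segments[OF assms]]
  by (simp add: char_mean_def)

lemma integral_char_eq_char_mean:
  assumes N: "continuous_on (char_triangle c) (\<lambda>z. N (fst z) (snd z))"
    and ys: "(y, s) \<in> char_triangle c"
  shows "integral {0..s} (\<lambda>u. N (y + s - u) u) = s * char_mean N y s"
proof -
  have "(y + s - u, u) \<in> char_triangle c" if "u \<in> {0..s}" for u
    using that ys abs_triangle_ineq[of y "s - u"] by auto
  then have "continuous_on {0..s} (\<lambda>u. N (y + s - u) u)"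
    by (intro continuous_on_compose2[OF N, of _ "\<lambda>u. (y + s - u, u)", simplified])
      (auto intro!: continuous_intros)
  then have "((\<lambda>r. s *\<^sub>R N (y + s - s * r) (s * r)) has_integral
      integral {s * 0..s * 1} (\<lambda>u. N (y + s - u) u)) {0..1}"
    using ys by (intro has_integral_substitution[where g' = "\<lambda>_. s"])
      (auto intro!: derivative_eq_intros simp: mult_left_le)
  from integral_unique[OF this] show ?thesis
    by (simp add: char_mean_def)
qed

lemma char_mean_mono:
  assumes "continuous_on (char_triangle c) (\<lambda>z. N (fst z) (snd z))"
    and "continuous_on (char_triangle c) (\<lambda>z. M (fst z) (snd z))"
    and "\<And>y s. (y, s) \<in> char_triangle c \<Longrightarrow> N y s \<le> M y s"
    and "(y, s) \<in> char_triangle c"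
  shows "char_mean N y s \<le> char_mean M y s"
  unfolding char_mean_def
  using assms char_triangle_segment[OF assms(4)]
  by (intro integral_le integrable_char_segment) auto

lemma abs_char_mean_le:
  assumes "continuous_on (char_triangle c) (\<lambda>z. N (fst z) (snd z))" "(y, s) \<in> char_triangle c"
  shows "\<bar>char_mean N y s\<bar> \<le> char_mean (\<lambda>y s. \<bar>N y s\<bar>) y s"
proof -
  have "continuous_on (char_triangle c) (\<lambda>z. \<bar>N (fst z) (snd z)\<bar>)"
    using assms(1) by (rule continuous_on_rabs)
  from integrable_char_segment[OF this assms(2)] show ?thesis
    unfolding char_mean_def
    using integral_norm_bound_integral[OF integrable_char_segment[OF assms]] by simp
qed

lemma char_mean_dominated:
  assumes N1: "continuous_on (char_triangle c) (\<lambda>z. N1 (fst z) (snd z))"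
    and N2: "continuous_on (char_triangle c) (\<lambda>z. N2 (fst z) (snd z))"
    and dom: "\<And>y s. (y, s) \<in> char_triangle c \<Longrightarrow> (1 + \<epsilon>) * \<bar>N1 y s\<bar> \<le> N2 y s"
    and "0 \<le> \<epsilon>" and ys: "(y, s) \<in> char_triangle c"
  shows "(1 + \<epsilon>) * \<bar>char_mean N1 y s\<bar> \<le> char_mean N2 y s"
proof -
  have cont: "continuous_on (char_triangle c) (\<lambda>z. (1 + \<epsilon>) * \<bar>N1 (fst z) (snd z)\<bar>)"
    using N1 by (intro continuous_intros)
  have "(1 + \<epsilon>) * \<bar>char_mean N1 y s\<bar> \<le> (1 + \<epsilon>) * char_mean (\<lambda>y s. \<bar>N1 y s\<bar>) y s"
    using abs_char_mean_le[OF N1 ys] \<open>0 \<le> \<epsilon>\<close>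
    by (intro mult_left_mono) auto
  also have "\<dots> = char_mean (\<lambda>y s. (1 + \<epsilon>) * \<bar>N1 y s\<bar>) y s"
    by (simp add: char_mean_def)
  also have "\<dots> \<le> char_mean N2 y s"
    by (rule char_mean_mono[OF cont N2 dom ys])
  finally show ?thesis .
qed

lemma has_derivative_char_mean:
  assumes N: "C1_partials_on (char_triangle c) N N1 N2" and ys: "(y, s) \<in> char_triangle c"
  shows "((\<lambda>z. char_mean N (fst z) (snd z)) has_derivative
    (\<lambda>v. char_mean N1 y s * fst v
      + integral {0..1} (\<lambda>r. N1 (y + s - s * r) (s * r) * (1 - r) + N2 (y + s - s * r) (s * r) * r)
        * snd v)) (at (y, s) within char_triangle c)"
proof -
  let ?T = "char_triangle c"
  let ?seg = "\<lambda>z r. (fst z + snd z - snd z * r, snd z * r)"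
  let ?A = "\<lambda>z r. N1 (fst (?seg z r)) (snd (?seg z r))"
  let ?B = "\<lambda>z r. ?A z r * (1 - r) + N2 (fst (?seg z r)) (snd (?seg z r)) * r"
  have seg: "?seg z r \<in> ?T" if "z \<in> ?T" "r \<in> {0..1}" for z r
    using char_triangle_segment[of "fst z" "snd z" c r] that by simp
  have "((\<lambda>z. N (fst (?seg z r)) (snd (?seg z r))) has_derivative (\<lambda>v. ?A z r * fst v + ?B z r * snd v))
      (at z within ?T)" if z: "z \<in> ?T" and r: "r \<in> {0..1}" for z r
  proof -
    have "((\<lambda>z. N (fst (?seg z r)) (snd (?seg z r))) has_derivative
        (\<lambda>v. N1 (fst (?seg z r)) (snd (?seg z r)) * fst (?seg v r)
           + N2 (fst (?seg z r)) (snd (?seg z r)) * snd (?seg v r))) (at z within ?T)"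
      by (rule C1_partials_on_compose[OF N _ z]) (use seg r in \<open>auto intro!: derivative_eq_intros\<close>)
    then show ?thesis
      by (rule has_derivative_eq_rhs) (auto simp: fun_eq_iff algebra_simps)
  qed
  moreover have "continuous_on (?T \<times> {0..1}) (\<lambda>w. ?A (fst w) (snd w))"
    using continuous_on_char_segments[OF C1_partials_on_continuous_x[OF N]] by simp
  moreover have "continuous_on (?T \<times> {0..1}) (\<lambda>w. ?B (fst w) (snd w))"
    using continuous_on_char_segments[OF C1_partials_on_continuous_x[OF N]]
      continuous_on_char_segments[OF C1_partials_on_continuous_t[OF N]]
    by (auto intro!: continuous_intros)
  moreover have "continuous_on {0..1} (\<lambda>r. N (fst (?seg z r)) (snd (?seg z r)))" if "z \<in> ?T" for z
    using continuous_on_slice[OF continuous_on_char_segments[OF C1_partials_on_continuous[OF N]] that]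
    by simp
  ultimately show ?thesis
    using has_derivative_integral_param[OF convex_char_triangle ys,
        where f = "\<lambda>z r. N (fst (?seg z r)) (snd (?seg z r))" and A = ?A and B = ?B]
    by (simp add: char_mean_def)
qed

text \<open>Integrate the derivative of r \<mapsto> (r - 1) N(y + s - s r, s r) over [0, 1].\<close>
lemma char_mean_time_identity:
  assumes N: "C1_partials_on (char_triangle c) N N1 N2" and ys: "(y, s) \<in> char_triangle c"
  shows "char_mean N y s
      + s * integral {0..1} (\<lambda>r. N1 (y + s - s * r) (s * r) * (1 - r) + N2 (y + s - s * r) (s * r) * r)
    = N (y + s) 0 + s * char_mean N2 y s"
proof -
  define n where "n = (\<lambda>r. N (y + s - s * r) (s * r))"
  define n1 where "n1 = (\<lambda>r. N1 (y + s - s * r) (s * r))"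
  define n2 where "n2 = (\<lambda>r. N2 (y + s - s * r) (s * r))"
  have dn: "(n has_real_derivative s * (n2 r - n1 r)) (at r within {0..1})" if r: "r \<in> {0..1}" for r
  proof -
    have "((\<lambda>r. N (fst (y + s - s * r, s * r)) (snd (y + s - s * r, s * r))) has_derivative
        (\<lambda>h. N1 (fst (y + s - s * r, s * r)) (snd (y + s - s * r, s * r)) * fst (- (s * h), s * h)
           + N2 (fst (y + s - s * r, s * r)) (snd (y + s - s * r, s * r)) * snd (- (s * h), s * h)))
        (at r within {0..1})"
      by (rule C1_partials_on_compose[OF N _ r])
        (use char_triangle_segment[OF ys] in \<open>auto intro!: derivative_eq_intros\<close>)
    then show ?thesis
      unfolding has_field_derivative_def n_def n1_def n2_def fst_conv snd_conv
      by (rule has_derivative_eq_rhs) (auto simp: fun_eq_iff algebra_simps)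
  qed
  have "((\<lambda>r. (r - 1) * n r) has_vector_derivative n r + (r - 1) * (s * (n2 r - n1 r)))
      (at r within {0..1})" if "r \<in> {0..1}" for r
    using DERIV_mult[OF DERIV_diff[OF DERIV_ident DERIV_const[of 1]] dn[OF that]]
    by (simp add: has_real_derivative_iff_has_vector_derivative[symmetric] algebra_simps)
  then have "((\<lambda>r. n r + (r - 1) * (s * (n2 r - n1 r))) has_integral n 0) {0..1}"
    using fundamental_theorem_of_calculus[of 0 1 "\<lambda>r. (r - 1) * n r"] by simp
  moreover have "((\<lambda>r. s * n2 r) has_integral s * integral {0..1} n2) {0..1}"
    using integrable_char_segment[OF C1_partials_on_continuous_t[OF N] ys]
    by (intro has_integral_mult_right) (simp add: n2_def has_integral_integral)
  ultimately have "((\<lambda>r. n r + s * (n1 r * (1 - r) + n2 r * r)) has_integral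
      n 0 + s * integral {0..1} n2) {0..1}"
    by (rule has_integral_add[THEN has_integral_eq[rotated]]) (simp add: algebra_simps)
  moreover have "((\<lambda>r. n r + s * (n1 r * (1 - r) + n2 r * r)) has_integral
      integral {0..1} n + s * integral {0..1} (\<lambda>r. n1 r * (1 - r) + n2 r * r)) {0..1}"
    using continuous_on_char_segment[OF C1_partials_on_continuous[OF N] ys]
      continuous_on_char_segment[OF C1_partials_on_continuous_x[OF N] ys]
      continuous_on_char_segment[OF C1_partials_on_continuous_t[OF N] ys]
    unfolding n_def n1_def n2_def
    by (intro has_integral_add has_integral_mult_right integrable_integral integrable_continuous_real
        continuous_intros)
  ultimately show ?thesis
    by (simp add: has_integral_unique char_mean_def n_def n1_def n2_def)
qed

lemma has_derivative_char_integral: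
  assumes N: "C1_partials_on (char_triangle c) N N1 N2" and ys: "(y, s) \<in> char_triangle c"
  shows "((\<lambda>w. integral {0..snd w} (\<lambda>u. N (fst w + snd w - u) u)) has_derivative
    (\<lambda>v. s * char_mean N1 y s * fst v + (N (y + s) 0 + s * char_mean N2 y s) * snd v))
    (at (y, s) within char_triangle c)"
proof -
  let ?I = "integral {0..1} (\<lambda>r. N1 (y + s - s * r) (s * r) * (1 - r) + N2 (y + s - s * r) (s * r) * r)"
  have D: "((\<lambda>w. snd w * char_mean N (fst w) (snd w)) has_derivative
      (\<lambda>v. s * (char_mean N1 y s * fst v + ?I * snd v) + snd v * char_mean N y s))
      (at (y, s) within char_triangle c)"
    using has_derivative_mult[OF has_derivative_snd[OF has_derivative_ident] has_derivative_char_mean[OF N ys]]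
    by simp
  have E: "(\<lambda>v. s * (char_mean N1 y s * fst v + ?I * snd v) + snd v * char_mean N y s)
      = (\<lambda>v. s * char_mean N1 y s * fst v + (N (y + s) 0 + s * char_mean N2 y s) * snd v)"
  proof
    fix v :: "real \<times> real"
    have "s * (char_mean N1 y s * fst v + ?I * snd v) + snd v * char_mean N y s
        = s * char_mean N1 y s * fst v + (char_mean N y s + s * ?I) * snd v"
      by (simp only: algebra_simps)
    also note char_mean_time_identity[OF N ys]
    finally show "s * (char_mean N1 y s * fst v + ?I * snd v) + snd v * char_mean N y s
        = s * char_mean N1 y s * fst v + (N (y + s) 0 + s * char_mean N2 y s) * snd v" .
  qed
  have eq: "snd w * char_mean N (fst w) (snd w) = integral {0..snd w} (\<lambda>u. N (fst w + snd w - u) u)"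
    if "w \<in> char_triangle c" for w
    using integral_char_eq_char_mean[OF C1_partials_on_continuous[OF N], of "fst w" "snd w"] that by simp
  show ?thesis
    by (rule has_derivative_transform_within[OF D[unfolded E] zero_less_one ys]) (rule eq)
qed

lemma C1_partials_on_char_integral:
  assumes N: "C1_partials_on (char_triangle c) N N1 N2"
    and F: "\<And>y. \<bar>y\<bar> \<le> c \<Longrightarrow> (F has_real_derivative F' y) (at y)"
    and F': "continuous_on {-c..c} F'"
  shows "C1_partials_on (char_triangle c) (\<lambda>x t. F (x + t) + integral {0..t} (\<lambda>s. N (x + t - s) s))
    (\<lambda>x t. F' (x + t) + t * char_mean N1 x t) (\<lambda>x t. F' (x + t) + N (x + t) 0 + t * char_mean N2 x t)"
proof -
  let ?T = "char_triangle c"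
  have foot: "(\<lambda>z. (fst z + snd z, 0)) ` ?T \<subseteq> ?T"
    using char_triangle_foot by force
  then have foot': "(\<lambda>z. fst z + snd z) ` ?T \<subseteq> {-c..c}"
    by (force simp: abs_le_iff)
  have F'_cont: "continuous_on ?T (\<lambda>z. F' (fst z + snd z))"
    by (rule continuous_on_compose2[OF F' _ foot']) (intro continuous_intros)
  have N_foot_cont: "continuous_on ?T (\<lambda>z. N (fst z + snd z) 0)"
    using continuous_on_compose2[OF C1_partials_on_continuous[OF N] _ foot]
    by (simp add: continuous_intros)
  show ?thesis
    unfolding C1_partials_on_def
  proof (intro conjI ballI)
    fix z
    assume "z \<in> ?T"
    then obtain y s where z: "z = (y, s)" and ys: "(y, s) \<in> ?T"
      by (cases z) auto
    have "(F has_derivative (\<lambda>h. F' (y + s) * h)) (at (y + s))"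
      using F[of "y + s"] foot' ys by (force simp: has_field_derivative_def)
    then have "((\<lambda>w. F (fst w + snd w)) has_derivative (\<lambda>v. F' (y + s) * (fst v + snd v)))
        (at (y, s) within ?T)"
      using has_derivative_compose[of "\<lambda>w. fst w + snd w" "\<lambda>v. fst v + snd v" "(y, s)" ?T F]
      by (simp add: has_derivative_add has_derivative_fst has_derivative_snd has_derivative_ident)
    from has_derivative_add[OF this has_derivative_char_integral[OF N ys]]
    show "((\<lambda>w. F (fst w + snd w) + integral {0..snd w} (\<lambda>s. N (fst w + snd w - s) s)) has_derivative
        (\<lambda>v. (F' (fst z + snd z) + snd z * char_mean N1 (fst z) (snd z)) * fst v
          + (F' (fst z + snd z) + N (fst z + snd z) 0 + snd z * char_mean N2 (fst z) (snd z)) * snd v))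
        (at z within ?T)"
      unfolding z by (rule has_derivative_eq_rhs) (simp add: fun_eq_iff algebra_simps)
  next
    show "continuous_on ?T (\<lambda>z. F' (fst z + snd z) + snd z * char_mean N1 (fst z) (snd z))"
      using F'_cont continuous_on_char_mean[OF C1_partials_on_continuous_x[OF N]]
      by (intro continuous_intros)
    show "continuous_on ?T (\<lambda>z. F' (fst z + snd z) + N (fst z + snd z) 0
        + snd z * char_mean N2 (fst z) (snd z))"
      using F'_cont N_foot_cont continuous_on_char_mean[OF C1_partials_on_continuous_t[OF N]]
      by (intro continuous_intros)
  qed
qed

section \<open>The cone condition on the gradient\<close>

definition time_dominant_on :: "(real \<times> real) set \<Rightarrow> real \<Rightarrow> (real \<Rightarrow> real \<Rightarrow> real) \<Rightarrow> bool" where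
  "time_dominant_on S \<epsilon> P \<longleftrightarrow>
    (\<exists>Px Pt. C1_partials_on S P Px Pt \<and> (\<forall>(y, s)\<in>S. (1 + \<epsilon>) * \<bar>Px y s\<bar> \<le> Pt y s))"

lemma time_dominant_on_const: "time_dominant_on S \<epsilon> (\<lambda>_ _. a)"
  unfolding time_dominant_on_def using C1_partials_on_const by fastforce

lemma time_dominant_on_reflect:
  assumes "time_dominant_on (char_triangle c) \<epsilon> P"
  shows "time_dominant_on (char_triangle c) \<epsilon> (\<lambda>y s. P (- y) s)"
proof -
  obtain Px Pt where P: "C1_partials_on (char_triangle c) P Px Pt"
    and dom: "\<forall>(y, s)\<in>char_triangle c. (1 + \<epsilon>) * \<bar>Px y s\<bar> \<le> Pt y s"
    using assms unfolding time_dominant_on_def by blast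
  show ?thesis
    unfolding time_dominant_on_def using C1_partials_on_reflect[OF P] dom by fastforce
qed

lemma time_dominant_at_interior:
  assumes "time_dominant_on S \<epsilon> P" "(x, t) \<in> interior S"
  shows "\<exists>Dt Dx. ((\<lambda>s. P x s) has_real_derivative Dt) (at t) \<and>
    ((\<lambda>y. P y t) has_real_derivative Dx) (at x) \<and> Dt \<ge> (1 + \<epsilon>) * \<bar>Dx\<bar>"
proof -
  obtain Px Pt where P: "C1_partials_on S P Px Pt"
    and dom: "\<forall>(y, s)\<in>S. (1 + \<epsilon>) * \<bar>Px y s\<bar> \<le> Pt y s"
    using assms(1) unfolding time_dominant_on_def by blast
  show ?thesis
    using partial_derivatives_at_interior[OF P assms(2)] dom assms(2) interior_subset by fast
qed

text \<open>The condition on F at the foot of the characteristics has to pay for \<open>|F'|\<close> twice: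
  once in the x-derivative and once because F' may be negative in the t-derivative.\<close>
lemma time_dominant_on_char_integral:
  assumes N: "time_dominant_on (char_triangle c) \<epsilon> N" and "0 \<le> \<epsilon>"
    and F: "\<And>y. \<bar>y\<bar> \<le> c \<Longrightarrow> (F has_real_derivative F' y) (at y)"
    and F': "continuous_on {-c..c} F'"
    and F'_bound: "\<And>y. \<bar>y\<bar> \<le> c \<Longrightarrow> (2 + \<epsilon>) * \<bar>F' y\<bar> \<le> N y 0"
  shows "time_dominant_on (char_triangle c) \<epsilon> (\<lambda>x t. F (x + t) + integral {0..t} (\<lambda>s. N (x + t - s) s))"
proof -
  obtain N1 N2 where N12: "C1_partials_on (char_triangle c) N N1 N2"
    and dom: "\<forall>(y, s)\<in>char_triangle c. (1 + \<epsilon>) * \<bar>N1 y s\<bar> \<le> N2 y s"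
    using N unfolding time_dominant_on_def by blast
  have dom': "(1 + \<epsilon>) * \<bar>N1 y s\<bar> \<le> N2 y s" if "(y, s) \<in> char_triangle c" for y s
    using dom that by blast
  have "(1 + \<epsilon>) * \<bar>F' (x + t) + t * char_mean N1 x t\<bar> \<le> F' (x + t) + N (x + t) 0 + t * char_mean N2 x t"
    if xt: "(x, t) \<in> char_triangle c" for x t
  proof -
    have "t \<ge> 0" "\<bar>x + t\<bar> \<le> c"
      using xt abs_triangle_ineq[of x t] by auto
    have "\<bar>F' (x + t) + t * char_mean N1 x t\<bar> \<le> \<bar>F' (x + t)\<bar> + t * \<bar>char_mean N1 x t\<bar>"
      using \<open>t \<ge> 0\<close> abs_triangle_ineq[of "F' (x + t)" "t * char_mean N1 x t"] by (simp add: abs_mult)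
    then have "(1 + \<epsilon>) * \<bar>F' (x + t) + t * char_mean N1 x t\<bar>
        \<le> (1 + \<epsilon>) * (\<bar>F' (x + t)\<bar> + t * \<bar>char_mean N1 x t\<bar>)"
      using \<open>0 \<le> \<epsilon>\<close> by (intro mult_left_mono) auto
    also have "\<dots> = (1 + \<epsilon>) * \<bar>F' (x + t)\<bar> + t * ((1 + \<epsilon>) * \<bar>char_mean N1 x t\<bar>)"
      by (simp add: algebra_simps)
    also have "\<dots> \<le> (1 + \<epsilon>) * \<bar>F' (x + t)\<bar> + t * char_mean N2 x t"
      using char_mean_dominated[OF C1_partials_on_continuous_x[OF N12] C1_partials_on_continuous_t[OF N12]
          dom' \<open>0 \<le> \<epsilon>\<close> xt] \<open>t \<ge> 0\<close>
      by (simp add: mult_left_mono)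
    also have "\<dots> \<le> F' (x + t) + N (x + t) 0 + t * char_mean N2 x t"
      using F'_bound[OF \<open>\<bar>x + t\<bar> \<le> c\<close>] by (simp add: algebra_simps abs_if split: if_splits)
    finally show ?thesis .
  qed
  then show ?thesis
    unfolding time_dominant_on_def using C1_partials_on_char_integral[OF N12 F F'] by blast
qed

lemma char_integral_lower_bound:
  fixes N :: "real \<Rightarrow> real \<Rightarrow> real"
  assumes N: "continuous_on (char_triangle c) (\<lambda>z. N (fst z) (snd z))"
    and N_nonneg: "\<And>y s. (y, s) \<in> char_triangle c \<Longrightarrow> 0 \<le> N y s"
    and F: "\<And>y. \<bar>y\<bar> \<le> c \<Longrightarrow> \<gamma> \<le> F y"
    and xt: "(x, t) \<in> char_triangle c"
  shows "\<gamma> \<le> F (x + t) + integral {0..t} (\<lambda>s. N (x + t - s) s)"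
proof -
  have "0 \<le> char_mean N x t"
    using char_mean_mono[of c "\<lambda>_ _. 0" N, OF _ N N_nonneg xt] by (simp add: char_mean_def)
  moreover have "\<gamma> \<le> F (x + t)"
    using xt abs_triangle_ineq[of x t] by (intro F) auto
  ultimately show ?thesis
    using xt by (simp add: integral_char_eq_char_mean[OF N xt] add_increasing2)
qed


section \<open>The nonlinearity\<close>

definition reaction :: "real \<Rightarrow> real \<Rightarrow> real \<Rightarrow> real \<Rightarrow> real" where
  "reaction p \<mu> u s = 2 powr (-p) * \<bar>u\<bar> powr p - \<mu> / (1 + s) * (u / 2)"

definition reaction_du :: "real \<Rightarrow> real \<Rightarrow> real \<Rightarrow> real \<Rightarrow> real" where
  "reaction_du p \<mu> u s = p * 2 powr (-p) * u powr (p - 1) - \<mu> / (1 + s) / 2"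

lemma Nl_eq_reaction: "Nl p \<mu> \<Phi> \<Psi> y s = reaction p \<mu> (\<Phi> y s + \<Psi> y s) s"
  by (simp add: Nl_def reaction_def)

lemma reaction_at_0: "0 \<le> u \<Longrightarrow> reaction p \<mu> u 0 = 2 powr (-p) * u powr p - \<mu> / 2 * u"
  by (simp add: reaction_def)

lemma has_derivative_reaction:
  assumes "0 < u" "0 < 1 + s"
  shows "((\<lambda>z. reaction p \<mu> (fst z) (snd z)) has_derivative
    (\<lambda>v. reaction_du p \<mu> u s * fst v + \<mu> / (1 + s)\<^sup>2 * (u / 2) * snd v)) (at (u, s))"
proof -
  define a where "a = \<mu> / (1 + s)"
  define b where "b = \<mu> / (1 + s)\<^sup>2"
  have "((\<lambda>v. \<bar>v\<bar> powr p) has_real_derivative p * u powr (p - 1)) (at u)"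
    using assms
    by (intro has_field_derivative_transform_within_open[OF has_real_derivative_powr open_greaterThan])
      auto
  (* The point is written as fst (u, s) so that has_derivative_compose can unify with it. *)
  then have "((\<lambda>v. \<bar>v\<bar> powr p) has_derivative (*) (p * u powr (p - 1))) (at (fst (u, s)))"
    by (simp add: has_field_derivative_def)
  from has_derivative_compose[OF has_derivative_fst[OF has_derivative_ident] this]
  have d1: "((\<lambda>z. \<bar>fst z\<bar> powr p) has_derivative (\<lambda>v. p * u powr (p - 1) * fst v)) (at (u, s))"
    by simp
  have d2: "((\<lambda>z. \<mu> / (1 + snd z)) has_derivative (\<lambda>v. - b * snd v)) (at (u, s))"
    unfolding b_def using assms
    by (auto intro!: derivative_eq_intros simp: power2_eq_square field_simps)
  have d3: "((\<lambda>z. fst z / 2) has_derivative (\<lambda>v. fst v / 2)) (at (u, s))"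
    by (auto intro!: derivative_eq_intros)
  have "((\<lambda>z. 2 powr (-p) * \<bar>fst z\<bar> powr p - \<mu> / (1 + snd z) * (fst z / 2)) has_derivative
      (\<lambda>v. (p * 2 powr (-p) * u powr (p - 1) - a / 2) * fst v + b * (u / 2) * snd v)) (at (u, s))"
    using has_derivative_diff[OF has_derivative_mult_right[OF d1] has_derivative_mult[OF d2 d3]]
    unfolding fst_conv snd_conv a_def[symmetric]
    by (rule has_derivative_eq_rhs) (simp add: fun_eq_iff field_simps)
  then show ?thesis
    by (simp add: reaction_def reaction_du_def a_def b_def)
qed

lemma C1_partials_on_Nl:
  assumes \<Phi>: "C1_partials_on S \<Phi> \<Phi>x \<Phi>t" and \<Psi>: "C1_partials_on S \<Psi> \<Psi>x \<Psi>t"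
    and pos: "\<And>y s. (y, s) \<in> S \<Longrightarrow> 0 < \<Phi> y s + \<Psi> y s"
    and S: "\<And>y s. (y, s) \<in> S \<Longrightarrow> 0 \<le> s"
  shows "C1_partials_on S (Nl p \<mu> \<Phi> \<Psi>)
    (\<lambda>y s. reaction_du p \<mu> (\<Phi> y s + \<Psi> y s) s * (\<Phi>x y s + \<Psi>x y s))
    (\<lambda>y s. reaction_du p \<mu> (\<Phi> y s + \<Psi> y s) s * (\<Phi>t y s + \<Psi>t y s)
      + \<mu> / (1 + s)\<^sup>2 * ((\<Phi> y s + \<Psi> y s) / 2))"
proof -
  note U = C1_partials_on_add[OF \<Phi> \<Psi>]
  have U_pos: "0 < \<Phi> (fst z) (snd z) + \<Psi> (fst z) (snd z)" and s_pos: "0 < 1 + snd z"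
    if "z \<in> S" for z
    using pos[of "fst z" "snd z"] S[of "fst z" "snd z"] that by auto
  show ?thesis
    unfolding C1_partials_on_def
  proof (intro conjI ballI)
    fix z
    assume z: "z \<in> S"
    have "((\<lambda>w. (\<Phi> (fst w) (snd w) + \<Psi> (fst w) (snd w), snd w)) has_derivative
        (\<lambda>v. ((\<Phi>x (fst z) (snd z) + \<Psi>x (fst z) (snd z)) * fst v
          + (\<Phi>t (fst z) (snd z) + \<Psi>t (fst z) (snd z)) * snd v, snd v))) (at z within S)"
      using has_derivative_Pair[OF C1_partials_on_has_derivative[OF U z] has_derivative_snd[OF has_derivative_ident]]
      by simp
    from has_derivative_compose[OF this has_derivative_reaction[where p = p and \<mu> = \<mu>, OF U_pos[OF z] s_pos[OF z]]]
    show "((\<lambda>w. Nl p \<mu> \<Phi> \<Psi> (fst w) (snd w)) has_derivative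
        (\<lambda>v. reaction_du p \<mu> (\<Phi> (fst z) (snd z) + \<Psi> (fst z) (snd z)) (snd z)
            * (\<Phi>x (fst z) (snd z) + \<Psi>x (fst z) (snd z)) * fst v
          + (reaction_du p \<mu> (\<Phi> (fst z) (snd z) + \<Psi> (fst z) (snd z)) (snd z)
            * (\<Phi>t (fst z) (snd z) + \<Psi>t (fst z) (snd z))
            + \<mu> / (1 + snd z)\<^sup>2 * ((\<Phi> (fst z) (snd z) + \<Psi> (fst z) (snd z)) / 2)) * snd v))
        (at z within S)"
      unfolding Nl_eq_reaction fst_conv snd_conv
      by (rule has_derivative_eq_rhs) (simp add: fun_eq_iff algebra_simps)
  next
    have "continuous_on S (\<lambda>z. reaction_du p \<mu> (\<Phi> (fst z) (snd z) + \<Psi> (fst z) (snd z)) (snd z))"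
      unfolding reaction_du_def
      using C1_partials_on_continuous[OF \<Phi>] C1_partials_on_continuous[OF \<Psi>] U_pos s_pos
      by (intro continuous_intros) (auto simp: less_imp_neq[symmetric])
    then show "continuous_on S (\<lambda>z. reaction_du p \<mu> (\<Phi> (fst z) (snd z) + \<Psi> (fst z) (snd z)) (snd z)
        * (\<Phi>x (fst z) (snd z) + \<Psi>x (fst z) (snd z)))"
      and "continuous_on S (\<lambda>z. reaction_du p \<mu> (\<Phi> (fst z) (snd z) + \<Psi> (fst z) (snd z)) (snd z)
        * (\<Phi>t (fst z) (snd z) + \<Psi>t (fst z) (snd z))
        + \<mu> / (1 + snd z)\<^sup>2 * ((\<Phi> (fst z) (snd z) + \<Psi> (fst z) (snd z)) / 2))"
      using s_pos C1_partials_on_continuous[OF \<Phi>] C1_partials_on_continuous[OF \<Psi>]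
        C1_partials_on_continuous_x[OF U] C1_partials_on_continuous_t[OF U]
      by (auto intro!: continuous_intros simp: less_imp_neq[symmetric])
  qed
qed

lemma damping_le: "0 \<le> \<mu> \<Longrightarrow> 0 \<le> s \<Longrightarrow> \<mu> / (1 + s) \<le> (\<mu> :: real)"
  using mult_nonneg_nonneg[of \<mu> s] by (simp add: divide_le_eq algebra_simps)

lemma reaction_du_nonneg:
  assumes "1 \<le> p" "0 \<le> \<mu>" "0 \<le> s" and K: "\<mu> / 2 \<le> 2 powr (-p) * u powr (p - 1)"
  shows "0 \<le> reaction_du p \<mu> u s"
proof -
  have "\<mu> / (1 + s) / 2 \<le> \<mu> / 2"
    by (rule divide_right_mono[OF damping_le[OF assms(2,3)]]) simp
  also have "\<dots> \<le> 1 * (2 powr (-p) * u powr (p - 1))"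
    using K by simp
  also have "\<dots> \<le> p * (2 powr (-p) * u powr (p - 1))"
    using \<open>1 \<le> p\<close> by (intro mult_right_mono) auto
  finally show ?thesis
    by (simp add: reaction_du_def mult.assoc)
qed

lemma reaction_nonneg:
  assumes "0 \<le> \<mu>" "0 \<le> s" "0 < u" and K: "\<mu> / 2 \<le> 2 powr (-p) * u powr (p - 1)"
  shows "0 \<le> reaction p \<mu> u s"
proof -
  have "\<mu> / (1 + s) * (u / 2) \<le> \<mu> * (u / 2)"
    using damping_le[OF assms(1,2)] assms(3) by (intro mult_right_mono) auto
  also have "\<dots> = u * (\<mu> / 2)"
    by simp
  also have "\<dots> \<le> u * (2 powr (-p) * u powr (p - 1))"
    using assms by (simp add: mult_left_mono)
  also have "\<dots> = 2 powr (-p) * \<bar>u\<bar> powr p"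
    using \<open>0 < u\<close> by (simp add: powr_mult_base)
  finally show ?thesis
    by (simp add: reaction_def)
qed

lemma reaction_mono:
  fixes G u :: real
  assumes "0 < G" "G \<le> u" "1 \<le> p" "0 \<le> \<mu>"
    and K: "\<And>w. G \<le> w \<Longrightarrow> \<mu> / 2 \<le> 2 powr (-p) * w powr (p - 1)"
  shows "reaction p \<mu> G 0 \<le> reaction p \<mu> u 0"
proof -
  have "2 powr (-p) * G powr p - \<mu> / 2 * G \<le> 2 powr (-p) * u powr p - \<mu> / 2 * u"
  proof (rule DERIV_nonneg_imp_increasing_open[OF \<open>G \<le> u\<close>])
    fix w
    assume w: "G < w" "w < u"
    have "((\<lambda>w. 2 powr (-p) * w powr p - \<mu> / 2 * w) has_real_derivative
        2 powr (-p) * (p * w powr (p - 1)) - \<mu> / 2 * 1) (at w)"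
      using w \<open>0 < G\<close> by (intro DERIV_diff DERIV_cmult has_real_derivative_powr DERIV_ident) auto
    moreover have "0 \<le> 2 powr (-p) * (p * w powr (p - 1)) - \<mu> / 2 * 1"
      using reaction_du_nonneg[OF \<open>1 \<le> p\<close> \<open>0 \<le> \<mu>\<close> order_refl K[of w]] w
      by (simp add: reaction_du_def mult_ac)
    ultimately show "\<exists>d. ((\<lambda>w. 2 powr (-p) * w powr p - \<mu> / 2 * w) has_real_derivative d) (at w) \<and> 0 \<le> d"
      by blast
  next
    show "continuous_on {G..u} (\<lambda>w. 2 powr (-p) * w powr p - \<mu> / 2 * w)"
      using \<open>0 < G\<close> by (intro continuous_intros) auto
  qed
  then show ?thesis
    using assms by (simp add: reaction_at_0)
qed

lemma half_mu_le_powr: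
  fixes p \<mu> G u :: real
  assumes "1 < p" "0 < \<mu>" and G: "(\<mu> * p * 2 powr p) powr (1 / (p - 1)) < G" and "G \<le> u"
  shows "\<mu> / 2 \<le> 2 powr (-p) * u powr (p - 1)"
proof -
  define M where "M = (\<mu> * p * 2 powr p) powr (1 / (p - 1))"
  have "\<mu> * p * 2 powr p = M powr (p - 1)"
    using assms by (simp add: M_def powr_powr)
  also have "\<dots> \<le> u powr (p - 1)"
    using assms by (intro powr_mono2) (auto simp: M_def)
  finally have "2 powr (-p) * (\<mu> * p * 2 powr p) \<le> 2 powr (-p) * u powr (p - 1)"
    by simp
  moreover have "2 powr (-p) * (\<mu> * p * 2 powr p) = \<mu> * p"
    by (simp add: powr_minus field_simps)
  moreover have "\<mu> / 2 \<le> \<mu> * p"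
    using assms by (simp add: mult_le_cancel_left1 less_imp_le)
  ultimately show ?thesis
    by linarith
qed

lemma time_dominant_on_Nl:
  assumes \<Phi>: "time_dominant_on (char_triangle c) \<epsilon> \<Phi>" and \<Psi>: "time_dominant_on (char_triangle c) \<epsilon> \<Psi>"
    and "0 \<le> \<epsilon>" "1 \<le> p" "0 < \<mu>"
    and pos: "\<And>y s. (y, s) \<in> char_triangle c \<Longrightarrow> 0 < \<Phi> y s + \<Psi> y s"
    and K: "\<And>y s. (y, s) \<in> char_triangle c \<Longrightarrow> \<mu> / 2 \<le> 2 powr (-p) * (\<Phi> y s + \<Psi> y s) powr (p - 1)"
  shows "time_dominant_on (char_triangle c) \<epsilon> (Nl p \<mu> \<Phi> \<Psi>)"
proof -
  obtain \<Phi>x \<Phi>t where \<Phi>': "C1_partials_on (char_triangle c) \<Phi> \<Phi>x \<Phi>t"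
    and \<Phi>_dom: "\<forall>(y, s)\<in>char_triangle c. (1 + \<epsilon>) * \<bar>\<Phi>x y s\<bar> \<le> \<Phi>t y s"
    using \<Phi> unfolding time_dominant_on_def by blast
  obtain \<Psi>x \<Psi>t where \<Psi>': "C1_partials_on (char_triangle c) \<Psi> \<Psi>x \<Psi>t"
    and \<Psi>_dom: "\<forall>(y, s)\<in>char_triangle c. (1 + \<epsilon>) * \<bar>\<Psi>x y s\<bar> \<le> \<Psi>t y s"
    using \<Psi> unfolding time_dominant_on_def by blast
  have Nl_dom: "(1 + \<epsilon>) * \<bar>reaction_du p \<mu> (\<Phi> y s + \<Psi> y s) s * (\<Phi>x y s + \<Psi>x y s)\<bar>
      \<le> reaction_du p \<mu> (\<Phi> y s + \<Psi> y s) s * (\<Phi>t y s + \<Psi>t y s) + \<mu> / (1 + s)\<^sup>2 * ((\<Phi> y s + \<Psi> y s) / 2)"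
    if ys: "(y, s) \<in> char_triangle c" for y s
  proof -
    define a where "a = reaction_du p \<mu> (\<Phi> y s + \<Psi> y s) s"
    have "0 \<le> a"
      unfolding a_def using ys assms by (intro reaction_du_nonneg K) auto
    have "(1 + \<epsilon>) * \<bar>\<Phi>x y s + \<Psi>x y s\<bar> \<le> (1 + \<epsilon>) * \<bar>\<Phi>x y s\<bar> + (1 + \<epsilon>) * \<bar>\<Psi>x y s\<bar>"
      using \<open>0 \<le> \<epsilon>\<close> abs_triangle_ineq[of "\<Phi>x y s" "\<Psi>x y s"]
      by (simp add: mult_left_mono flip: distrib_left)
    also have "\<dots> \<le> \<Phi>t y s + \<Psi>t y s"
      using \<Phi>_dom \<Psi>_dom ys by fastforce
    finally have "a * ((1 + \<epsilon>) * \<bar>\<Phi>x y s + \<Psi>x y s\<bar>) \<le> a * (\<Phi>t y s + \<Psi>t y s)"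
      using \<open>0 \<le> a\<close> by (rule mult_left_mono)
    then have "(1 + \<epsilon>) * \<bar>a * (\<Phi>x y s + \<Psi>x y s)\<bar> \<le> a * (\<Phi>t y s + \<Psi>t y s)"
      using \<open>0 \<le> a\<close> by (simp add: abs_mult mult.left_commute)
    moreover have "0 \<le> \<mu> / (1 + s)\<^sup>2 * ((\<Phi> y s + \<Psi> y s) / 2)"
      using pos[OF ys] \<open>0 < \<mu>\<close> by simp
    ultimately show ?thesis
      unfolding a_def by linarith
  qed
  have "C1_partials_on (char_triangle c) (Nl p \<mu> \<Phi> \<Psi>)
    (\<lambda>y s. reaction_du p \<mu> (\<Phi> y s + \<Psi> y s) s * (\<Phi>x y s + \<Psi>x y s))
    (\<lambda>y s. reaction_du p \<mu> (\<Phi> y s + \<Psi> y s) s * (\<Phi>t y s + \<Psi>t y s)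
      + \<mu> / (1 + s)\<^sup>2 * ((\<Phi> y s + \<Psi> y s) / 2))"
    by (rule C1_partials_on_Nl[OF \<Phi>' \<Psi>' pos]) auto
  with Nl_dom show ?thesis
    unfolding time_dominant_on_def by blast
qed

section \<open>The iteration\<close>

lemma iterate_step:
  assumes \<Phi>: "time_dominant_on (char_triangle c) \<epsilon> \<Phi>" and \<Psi>: "time_dominant_on (char_triangle c) \<epsilon> \<Psi>"
    and lower: "\<And>y s. (y, s) \<in> char_triangle c \<Longrightarrow> G \<le> \<Phi> y s + \<Psi> y s"
    and "0 < G" "0 \<le> \<epsilon>" "1 \<le> p" "0 < \<mu>"
    and K: "\<And>u. G \<le> u \<Longrightarrow> \<mu> / 2 \<le> 2 powr (-p) * u powr (p - 1)"
    and F: "\<And>y. \<bar>y\<bar> \<le> c \<Longrightarrow> (F has_real_derivative F' y) (at y)" "continuous_on {-c..c} F'"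
    and F_ge: "\<And>y. \<bar>y\<bar> \<le> c \<Longrightarrow> \<gamma> \<le> F y"
    and F'_bound: "\<And>y. \<bar>y\<bar> \<le> c \<Longrightarrow> (2 + \<epsilon>) * \<bar>F' y\<bar> \<le> reaction p \<mu> G 0"
  shows "time_dominant_on (char_triangle c) \<epsilon>
      (\<lambda>x t. F (x + t) + integral {0..t} (\<lambda>s. Nl p \<mu> \<Phi> \<Psi> (x + t - s) s))"
    and "\<And>x t. (x, t) \<in> char_triangle c \<Longrightarrow> \<gamma> \<le> F (x + t) + integral {0..t} (\<lambda>s. Nl p \<mu> \<Phi> \<Psi> (x + t - s) s)"
proof -
  have pos: "0 < \<Phi> y s + \<Psi> y s" if "(y, s) \<in> char_triangle c" for y s
    using lower[OF that] \<open>0 < G\<close> by linarith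
  have N: "time_dominant_on (char_triangle c) \<epsilon> (Nl p \<mu> \<Phi> \<Psi>)"
    using assms pos by (intro time_dominant_on_Nl) auto
  have "(2 + \<epsilon>) * \<bar>F' y\<bar> \<le> Nl p \<mu> \<Phi> \<Psi> y 0" if y: "\<bar>y\<bar> \<le> c" for y
  proof -
    have "G \<le> \<Phi> y 0 + \<Psi> y 0"
      using lower y by simp
    from reaction_mono[OF \<open>0 < G\<close> this \<open>1 \<le> p\<close> _ K] F'_bound[OF y] \<open>0 < \<mu>\<close> show ?thesis
      by (simp add: Nl_eq_reaction)
  qed
  then show "time_dominant_on (char_triangle c) \<epsilon>
      (\<lambda>x t. F (x + t) + integral {0..t} (\<lambda>s. Nl p \<mu> \<Phi> \<Psi> (x + t - s) s))"
    using time_dominant_on_char_integral[OF N \<open>0 \<le> \<epsilon>\<close> F] by blast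
  have N_cont: "continuous_on (char_triangle c) (\<lambda>z. Nl p \<mu> \<Phi> \<Psi> (fst z) (snd z))"
    using N C1_partials_on_continuous unfolding time_dominant_on_def by blast
  show "\<gamma> \<le> F (x + t) + integral {0..t} (\<lambda>s. Nl p \<mu> \<Phi> \<Psi> (x + t - s) s)"
    if "(x, t) \<in> char_triangle c" for x t
    using assms pos that
    by (intro char_integral_lower_bound[OF N_cont _ F_ge]) (auto simp: Nl_eq_reaction intro!: reaction_nonneg K)
qed

lemma iterate_step_reflected:
  assumes \<Phi>: "time_dominant_on (char_triangle c) \<epsilon> \<Phi>" and \<Psi>: "time_dominant_on (char_triangle c) \<epsilon> \<Psi>"
    and lower: "\<And>y s. (y, s) \<in> char_triangle c \<Longrightarrow> G \<le> \<Phi> y s + \<Psi> y s"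
    and "0 < G" "0 \<le> \<epsilon>" "1 \<le> p" "0 < \<mu>"
    and K: "\<And>u. G \<le> u \<Longrightarrow> \<mu> / 2 \<le> 2 powr (-p) * u powr (p - 1)"
    and F: "\<And>y. \<bar>y\<bar> \<le> c \<Longrightarrow> (F has_real_derivative F' y) (at y)" "continuous_on {-c..c} F'"
    and F_ge: "\<And>y. \<bar>y\<bar> \<le> c \<Longrightarrow> \<gamma> \<le> F y"
    and F'_bound: "\<And>y. \<bar>y\<bar> \<le> c \<Longrightarrow> (2 + \<epsilon>) * \<bar>F' y\<bar> \<le> reaction p \<mu> G 0"
  shows "time_dominant_on (char_triangle c) \<epsilon>
      (\<lambda>x t. F (x - t) + integral {0..t} (\<lambda>s. Nl p \<mu> \<Phi> \<Psi> (x - t + s) s))"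
    and "\<And>x t. (x, t) \<in> char_triangle c \<Longrightarrow> \<gamma> \<le> F (x - t) + integral {0..t} (\<lambda>s. Nl p \<mu> \<Phi> \<Psi> (x - t + s) s)"
proof -
  let ?P = "\<lambda>x t. F (- (x + t)) + integral {0..t}
    (\<lambda>s. Nl p \<mu> (\<lambda>y s. \<Phi> (- y) s) (\<lambda>y s. \<Psi> (- y) s) (x + t - s) s)"
  have F_mirror: "((\<lambda>y. F (- y)) has_real_derivative - F' (- y)) (at y)" if "\<bar>y\<bar> \<le> c" for y
    using F(1)[of "- y"] that by (simp add: DERIV_mirror)
  have "continuous_on {-c..c} (\<lambda>y. F' (- y))"
    by (rule continuous_on_compose2[OF F(2)]) (auto intro!: continuous_intros)
  then have F'_mirror: "continuous_on {-c..c} (\<lambda>y. - F' (- y))"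
    by (rule continuous_on_minus)
  have lower_mirror: "G \<le> \<Phi> (- y) s + \<Psi> (- y) s" if "(y, s) \<in> char_triangle c" for y s
    using lower[of "- y" s] that by simp
  note step = iterate_step[OF time_dominant_on_reflect[OF \<Phi>] time_dominant_on_reflect[OF \<Psi>]
      lower_mirror \<open>0 < G\<close> \<open>0 \<le> \<epsilon>\<close> \<open>1 \<le> p\<close> \<open>0 < \<mu>\<close> K F_mirror F'_mirror, of \<gamma>]
  have eq: "(\<lambda>x t. F (x - t) + integral {0..t} (\<lambda>s. Nl p \<mu> \<Phi> \<Psi> (x - t + s) s)) = (\<lambda>x t. ?P (- x) t)"
    by (simp add: fun_eq_iff Nl_def algebra_simps)
  show "time_dominant_on (char_triangle c) \<epsilon>
      (\<lambda>x t. F (x - t) + integral {0..t} (\<lambda>s. Nl p \<mu> \<Phi> \<Psi> (x - t + s) s))"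
    unfolding eq using F_ge F'_bound by (intro time_dominant_on_reflect step(1)) auto
  show "\<gamma> \<le> F (x - t) + integral {0..t} (\<lambda>s. Nl p \<mu> \<Phi> \<Psi> (x - t + s) s)"
    if "(x, t) \<in> char_triangle c" for x t
    using step(2)[of "- x" t] F_ge F'_bound that fun_cong[OF fun_cong[OF eq, of x], of t] by simp
qed

lemma phi_0: "phi p \<mu> f g \<gamma>1 \<gamma>2 0 = (\<lambda>x t. \<gamma>1)"
  by (simp add: phi_def)

lemma psi_0: "psi p \<mu> f g \<gamma>1 \<gamma>2 0 = (\<lambda>x t. \<gamma>2)"
  by (simp add: psi_def)

lemma phi_Suc: "phi p \<mu> f g \<gamma>1 \<gamma>2 (Suc n) = (\<lambda>x t. f (x + t) + integral {0..t}
    (\<lambda>s. Nl p \<mu> (phi p \<mu> f g \<gamma>1 \<gamma>2 n) (psi p \<mu> f g \<gamma>1 \<gamma>2 n) (x + t - s) s))"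
  by (simp add: phi_def psi_def Let_def)

lemma psi_Suc: "psi p \<mu> f g \<gamma>1 \<gamma>2 (Suc n) = (\<lambda>x t. g (x - t) + integral {0..t}
    (\<lambda>s. Nl p \<mu> (phi p \<mu> f g \<gamma>1 \<gamma>2 n) (psi p \<mu> f g \<gamma>1 \<gamma>2 n) (x - t + s) s))"
  by (simp add: phi_def psi_def Let_def)

lemma iterates_time_dominant:
  assumes "0 < \<gamma>1" "0 < \<gamma>2" "0 \<le> \<epsilon>" "1 \<le> p" "0 < \<mu>"
    and K: "\<And>u. \<gamma>1 + \<gamma>2 \<le> u \<Longrightarrow> \<mu> / 2 \<le> 2 powr (-p) * u powr (p - 1)"
    and f: "\<And>y. \<bar>y\<bar> \<le> c \<Longrightarrow> (f has_real_derivative f' y) (at y)" "continuous_on {-c..c} f'"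
    and g: "\<And>y. \<bar>y\<bar> \<le> c \<Longrightarrow> (g has_real_derivative g' y) (at y)" "continuous_on {-c..c} g'"
    and fg_ge: "\<And>y. \<bar>y\<bar> \<le> c \<Longrightarrow> \<gamma>1 \<le> f y \<and> \<gamma>2 \<le> g y"
    and bound: "\<And>y. \<bar>y\<bar> \<le> c \<Longrightarrow>
      (2 + \<epsilon>) * (\<bar>f' y\<bar> + \<bar>g' y\<bar>) \<le> reaction p \<mu> (\<gamma>1 + \<gamma>2) 0"
  shows "time_dominant_on (char_triangle c) \<epsilon> (phi p \<mu> f g \<gamma>1 \<gamma>2 n)
    \<and> time_dominant_on (char_triangle c) \<epsilon> (psi p \<mu> f g \<gamma>1 \<gamma>2 n)
    \<and> (\<forall>(y, s)\<in>char_triangle c. \<gamma>1 \<le> phi p \<mu> f g \<gamma>1 \<gamma>2 n y s \<and> \<gamma>2 \<le> psi p \<mu> f g \<gamma>1 \<gamma>2 n y s)"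
proof (induction n)
  case 0
  show ?case
    by (simp add: phi_0 psi_0 time_dominant_on_const)
next
  case (Suc n)
  let ?\<Phi> = "phi p \<mu> f g \<gamma>1 \<gamma>2 n" and ?\<Psi> = "psi p \<mu> f g \<gamma>1 \<gamma>2 n"
  have lower: "\<gamma>1 + \<gamma>2 \<le> ?\<Phi> y s + ?\<Psi> y s" if "(y, s) \<in> char_triangle c" for y s
    using Suc.IH that by fastforce
  have f'_bound: "(2 + \<epsilon>) * \<bar>f' y\<bar> \<le> reaction p \<mu> (\<gamma>1 + \<gamma>2) 0"
    and g'_bound: "(2 + \<epsilon>) * \<bar>g' y\<bar> \<le> reaction p \<mu> (\<gamma>1 + \<gamma>2) 0"
    if "\<bar>y\<bar> \<le> c" for y
  proof -
    have "(2 + \<epsilon>) * \<bar>f' y\<bar> \<le> (2 + \<epsilon>) * (\<bar>f' y\<bar> + \<bar>g' y\<bar>)"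
      and "(2 + \<epsilon>) * \<bar>g' y\<bar> \<le> (2 + \<epsilon>) * (\<bar>f' y\<bar> + \<bar>g' y\<bar>)"
      using \<open>0 \<le> \<epsilon>\<close> by (intro mult_left_mono; simp)+
    then show "(2 + \<epsilon>) * \<bar>f' y\<bar> \<le> reaction p \<mu> (\<gamma>1 + \<gamma>2) 0"
      and "(2 + \<epsilon>) * \<bar>g' y\<bar> \<le> reaction p \<mu> (\<gamma>1 + \<gamma>2) 0"
      using bound[OF that] by linarith+
  qed
  note hyps = conjunct1[OF Suc.IH] conjunct1[OF conjunct2[OF Suc.IH]] lower
    add_pos_pos[OF \<open>0 < \<gamma>1\<close> \<open>0 < \<gamma>2\<close>] \<open>0 \<le> \<epsilon>\<close> \<open>1 \<le> p\<close> \<open>0 < \<mu>\<close> K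
  note phi_step = iterate_step[OF hyps f, of \<gamma>1] and psi_step = iterate_step_reflected[OF hyps g, of \<gamma>2]
  show ?case
    unfolding phi_Suc psi_Suc using phi_step psi_step fg_ge f'_bound g'_bound by auto
qed

lemma C4_on_interval_has_derivative:
  assumes "C4_on {-a..a} f"
  obtains f' where "continuous_on {-a..a} f'" "\<And>y. \<bar>y\<bar> < a \<Longrightarrow> (f has_real_derivative f' y) (at y)"
proof -
  obtain F where F0: "F 0 = f"
    and F: "\<forall>k<4. \<forall>y\<in>{-a..a}. (F k has_real_derivative F (Suc k) y) (at y within {-a..a})"
    using assms unfolding C4_on_def by blast
  have "continuous_on {-a..a} (F 1)"
    using F by (intro DERIV_continuous_on[of _ _ "F 2"]) (simp add: numeral_2_eq_2)
  moreover have "(f has_real_derivative F 1 y) (at y)" if "\<bar>y\<bar> < a" for y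
  proof -
    have y: "y \<in> interior {-a..a}"
      using that by (simp add: abs_less_iff)
    have "(F 0 has_real_derivative F 1 y) (at y within {-a..a})"
      using F y interior_subset by auto
    then show ?thesis
      by (simp add: F0 at_within_interior[OF y])
  qed
  ultimately show ?thesis
    by (rule that)
qed

lemma iterates_time_dominant_C4:
  assumes "1 < p" "0 < \<mu>" "0 < \<gamma>1" "0 < \<gamma>2" "0 < \<epsilon>"
    and gsum: "(\<mu> * p * 2 powr p) powr (1 / (p - 1)) < \<gamma>1 + \<gamma>2"
    and A2: "\<forall>y. \<bar>y\<bar> < a \<longrightarrow> \<gamma>1 \<le> f y \<and> \<gamma>2 \<le> g y"
    and A3: "C4_on {-a..a} f" "C4_on {-a..a} g"
    and A4: "\<forall>y. \<bar>y\<bar> < a \<longrightarrow>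
      (2 + \<epsilon>) * (\<bar>deriv f y\<bar> + \<bar>deriv g y\<bar>) \<le> 2 powr (-p) * (\<gamma>1 + \<gamma>2) powr p - \<mu> / 2 * (\<gamma>1 + \<gamma>2)"
    and "c < a"
  shows "time_dominant_on (char_triangle c) \<epsilon> (phi p \<mu> f g \<gamma>1 \<gamma>2 n)
    \<and> time_dominant_on (char_triangle c) \<epsilon> (psi p \<mu> f g \<gamma>1 \<gamma>2 n)"
proof -
  obtain f' where f': "continuous_on {-a..a} f'" "\<And>y. \<bar>y\<bar> < a \<Longrightarrow> (f has_real_derivative f' y) (at y)"
    using C4_on_interval_has_derivative[OF A3(1)] by blast
  obtain g' where g': "continuous_on {-a..a} g'" "\<And>y. \<bar>y\<bar> < a \<Longrightarrow> (g has_real_derivative g' y) (at y)"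
    using C4_on_interval_has_derivative[OF A3(2)] by blast
  have c: "\<bar>y\<bar> < a" if "\<bar>y\<bar> \<le> c" for y
    using that \<open>c < a\<close> by simp
  have sub: "{-c..c} \<subseteq> {-a..a}"
    using \<open>c < a\<close> by auto
  have "time_dominant_on (char_triangle c) \<epsilon> (phi p \<mu> f g \<gamma>1 \<gamma>2 n)
      \<and> time_dominant_on (char_triangle c) \<epsilon> (psi p \<mu> f g \<gamma>1 \<gamma>2 n)
      \<and> (\<forall>(y, s)\<in>char_triangle c. \<gamma>1 \<le> phi p \<mu> f g \<gamma>1 \<gamma>2 n y s \<and> \<gamma>2 \<le> psi p \<mu> f g \<gamma>1 \<gamma>2 n y s)"
  proof (rule iterates_time_dominant[where f' = f' and g' = g'])
    show "\<mu> / 2 \<le> 2 powr (-p) * u powr (p - 1)" if "\<gamma>1 + \<gamma>2 \<le> u" for u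
      by (rule half_mu_le_powr[OF \<open>1 < p\<close> \<open>0 < \<mu>\<close> gsum that])
    show "continuous_on {-c..c} f'" "continuous_on {-c..c} g'"
      using continuous_on_subset[OF f'(1) sub] continuous_on_subset[OF g'(1) sub] .
    show "(2 + \<epsilon>) * (\<bar>f' y\<bar> + \<bar>g' y\<bar>) \<le> reaction p \<mu> (\<gamma>1 + \<gamma>2) 0" if "\<bar>y\<bar> \<le> c" for y
      using A4 c[OF that] DERIV_imp_deriv[OF f'(2)] DERIV_imp_deriv[OF g'(2)] assms(3,4)
      by (simp add: reaction_at_0)
    show "(f has_real_derivative f' y) (at y)" "(g has_real_derivative g' y) (at y)" if "\<bar>y\<bar> \<le> c" for y
      using c[OF that] f'(2) g'(2) by auto
    show "\<gamma>1 \<le> f y \<and> \<gamma>2 \<le> g y" if "\<bar>y\<bar> \<le> c" for y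
      using A2 c[OF that] by auto
  qed (use assms in auto)
  then show ?thesis
    by blast
qed

theorem lemma4p2:
  fixes p \<mu> R T \<gamma>1 \<gamma>2 \<epsilon>0 :: real and f g :: "real \<Rightarrow> real"
  assumes p: "p > 1" and mu: "\<mu> > 0" and pmu: "p < 1 + 2 / \<mu>"
    and R: "R > 0" and T: "T > 0"
    and g1: "\<gamma>1 > 0" and g2: "\<gamma>2 > 0"
    and gsum: "\<gamma>1 + \<gamma>2 > max 1 ((\<mu> * p * 2 powr p) powr (1 / (p - 1)))"
    and A2: "\<forall>x. \<bar>x\<bar> < R + T \<longrightarrow> f x \<ge> \<gamma>1 \<and> g x \<ge> \<gamma>2"
    and A3: "C4_on {-(R + T)..R + T} f" "C4_on {-(R + T)..R + T} g"
    and eps: "\<epsilon>0 > 0"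
    and A4: "\<forall>x. \<bar>x\<bar> < R + T \<longrightarrow>
        2 powr (-p) * (\<gamma>1 + \<gamma>2) powr p - \<mu> / 2 * (\<gamma>1 + \<gamma>2)
          \<ge> (2 + \<epsilon>0) * (\<bar>deriv f x\<bar> + \<bar>deriv g x\<bar>)"
    and xt: "(x, t) \<in> Kcone R T"
  shows "(\<exists>Dt Dx. ((\<lambda>s. phi p \<mu> f g \<gamma>1 \<gamma>2 n x s) has_real_derivative Dt) (at t) \<and>
                 ((\<lambda>y. phi p \<mu> f g \<gamma>1 \<gamma>2 n y t) has_real_derivative Dx) (at x) \<and>
                 Dt \<ge> (1 + \<epsilon>0) * \<bar>Dx\<bar>) \<and>
         (\<exists>Dt Dx. ((\<lambda>s. psi p \<mu> f g \<gamma>1 \<gamma>2 n x s) has_real_derivative Dt) (at t) \<and>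
                 ((\<lambda>y. psi p \<mu> f g \<gamma>1 \<gamma>2 n y t) has_real_derivative Dx) (at x) \<and>
                 Dt \<ge> (1 + \<epsilon>0) * \<bar>Dx\<bar>)"
proof -
  obtain x0 where "\<bar>x0\<bar> < R" "\<bar>x - x0\<bar> < T - t" "0 < t"
    using xt by (auto simp: Kcone_def)
  then have "\<bar>x\<bar> + t < R + T"
    using abs_triangle_ineq[of x0 "x - x0"] by simp
  define c where "c = (\<bar>x\<bar> + t + (R + T)) / 2"
  have "\<bar>x\<bar> + t < c" "c < R + T"
    using \<open>\<bar>x\<bar> + t < R + T\<close> by (simp_all add: c_def)
  have "time_dominant_on (char_triangle c) \<epsilon>0 (phi p \<mu> f g \<gamma>1 \<gamma>2 n)
      \<and> time_dominant_on (char_triangle c) \<epsilon>0 (psi p \<mu> f g \<gamma>1 \<gamma>2 n)"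
    using gsum A2 A4 \<open>c < R + T\<close>
    by (intro iterates_time_dominant_C4[OF p mu g1 g2 eps _ _ A3]) (auto simp: ac_simps)
  moreover have "(x, t) \<in> interior (char_triangle c)"
    using interior_char_triangle[OF \<open>0 < t\<close> \<open>\<bar>x\<bar> + t < c\<close>] .
  ultimately show ?thesis
    using time_dominant_at_interior by blast
qed

end
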